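(* If $X$ is a proper geodesic metric space, then its Freudenthal compactification coincides with its coarse Freudenthal compactification $CF(X)$ (i.e. the identity of $X$ extends to a homeomorphism between them).
   Context: The Freudenthal compactification of $X$ is $X\cup\mathrm{Ends}(X)$, where a Freudenthal end is a decreasing sequence $\{U_i\}_{i\ge1}$ with $U_i$ a component of $X\setminus K_i$, for an exhaustion of $X$ by compact sets $K_i\subset\operatorname{int}(K_{i+1})$; the topology has as basis the open subsets of $X$ with compact closure and the sets consisting of a component $U$ of some $X\setminus K_i$ together with all ends containing $U$. A glacial scale on $X$ is a sequence $\mathcal S=\{(K_i,n_i)\}_{i\ge1}$, $K_i$ bounded subsets, $n_i$ natural numbers, such that for every bounded $K$ and $r>0$ there is $i$ with $K\subset K_i$, $n_i>r$; an $\mathcal S$-chain is a finite sequence $x_1,\dots,x_n$ with, for each $i\le n-1$, some $m$ such that $x_i,x_{i+1}\notin K_m$ and $d(x_i,x_{i+1})\le n_m$; $f:X\to\mathbb R$ is glacially oscillating if for every $\epsilon>0$ there is a glacial scale $\mathcal S$ with $|f(x_1)-f(x_n)|<\epsilon$ for all $\mathcal S$-chains. The coarse Freudenthal compactification $CF(X)$ of a proper metric space $X$ is the compactification induced by all continuous glacially oscillating functions $X\to[0,1]$. *)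

theory Defs
  imports "HOL-Analysis.Analysis"
begin

section \<open>Proper geodesic metric spaces (the whole type is the space X)\<close>

definition proper_metric_space :: "'a::metric_space itself \<Rightarrow> bool" where
  "proper_metric_space _ \<longleftrightarrow> (\<forall>S::'a set. bounded S \<and> closed S \<longrightarrow> compact S)"

definition geodesic_metric_space :: "'a::metric_space itself \<Rightarrow> bool" where
  "geodesic_metric_space _ \<longleftrightarrow>
     (\<forall>x y::'a. \<exists>\<gamma>::real \<Rightarrow> 'a. \<gamma> 0 = x \<and> \<gamma> (dist x y) = y \<and>
        (\<forall>s\<in>{0..dist x y}. \<forall>t\<in>{0..dist x y}. dist (\<gamma> s) (\<gamma> t) = \<bar>s - t\<bar>))"

definition exhaustion :: "(nat \<Rightarrow> 'a::metric_space set) \<Rightarrow> bool" where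
  "exhaustion K \<longleftrightarrow> (\<forall>i. compact (K i) \<and> K i \<subseteq> interior (K (Suc i))) \<and> (\<Union>i. K i) = UNIV"

definition freudenthal_ends :: "(nat \<Rightarrow> 'a::metric_space set) \<Rightarrow> (nat \<Rightarrow> 'a set) set" where
  "freudenthal_ends K = {U. (\<forall>i. U i \<in> components (- K i)) \<and> (\<forall>i. U (Suc i) \<subseteq> U i)}"

text \<open>The basis of the topology of X \<union> Ends(X): points of X are Inl x, ends are Inr e.\<close>
definition freudenthal_basis :: "(nat \<Rightarrow> 'a::metric_space set) \<Rightarrow> ('a + (nat \<Rightarrow> 'a set)) set set" where
  "freudenthal_basis K =
     {Inl ` V | V. open V \<and> compact (closure V)} \<union>
     {Inl ` U \<union> Inr ` {e \<in> freudenthal_ends K. \<exists>j. e j = U} | U i. U \<in> components (- K i)}"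

definition freudenthal_compactification ::
    "(nat \<Rightarrow> 'a::metric_space set) \<Rightarrow> ('a + (nat \<Rightarrow> 'a set)) topology" where
  "freudenthal_compactification K = topology_generated_by (freudenthal_basis K)"

definition glacial_scale :: "(nat \<Rightarrow> 'a::metric_space set \<times> nat) \<Rightarrow> bool" where
  "glacial_scale S \<longleftrightarrow> (\<forall>i. bounded (fst (S i))) \<and>
     (\<forall>K r. bounded K \<and> r > (0::real) \<longrightarrow> (\<exists>i. K \<subseteq> fst (S i) \<and> real (snd (S i)) > r))"

definition glacial_chain :: "(nat \<Rightarrow> 'a::metric_space set \<times> nat) \<Rightarrow> 'a list \<Rightarrow> bool" where
  "glacial_chain S xs \<longleftrightarrow> xs \<noteq> [] \<and>
     (\<forall>i. Suc i < length xs \<longrightarrow>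
        (\<exists>m. xs ! i \<notin> fst (S m) \<and> xs ! Suc i \<notin> fst (S m) \<and>
             dist (xs ! i) (xs ! Suc i) \<le> real (snd (S m))))"

definition glacially_oscillating :: "('a::metric_space \<Rightarrow> real) \<Rightarrow> bool" where
  "glacially_oscillating f \<longleftrightarrow>
     (\<forall>\<epsilon>>0. \<exists>S. glacial_scale S \<and>
        (\<forall>xs. glacial_chain S xs \<longrightarrow> \<bar>f (hd xs) - f (last xs)\<bar> < \<epsilon>))"

definition CF_functions :: "('a::metric_space \<Rightarrow> real) set" where
  "CF_functions = {f. continuous_on UNIV f \<and> range f \<subseteq> {0..1} \<and> glacially_oscillating f}"

definition CF_embed :: "'a::metric_space \<Rightarrow> (('a \<Rightarrow> real) \<Rightarrow> real)" where
  "CF_embed x = restrict (\<lambda>f. f x) CF_functions"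

definition CF_cube :: "(('a::metric_space \<Rightarrow> real) \<Rightarrow> real) topology" where
  "CF_cube = product_topology (\<lambda>_. top_of_set {0..1}) CF_functions"

definition coarse_freudenthal_compactification :: "(('a::metric_space \<Rightarrow> real) \<Rightarrow> real) topology" where
  "coarse_freudenthal_compactification =
     subtopology CF_cube (CF_cube closure_of (range CF_embed))"

end

(* A continuous glacially oscillating function f is almost constant on every connected set
   that avoids a large bounded set, because any two points of such a set are joined by a
   chain of short steps, which is a glacial chain.  So f is almost constant on the
   components of X - K i for large i and has a limit along every Freudenthal end; these
   limits extend the evaluation map of X to a continuous map from the Freudenthal
   compactification into CF(X).

   In a geodesic space, two points at distance at most d from each other and at distance
   more than d from a set C lie in the same component of X - C.  Hence the tent functions
   and the distance to the complement of a component U of X - K i, truncated at 1, are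
   glacially oscillating; they separate points from points and ends and ends from ends,
   and they cut out the basic neighbourhoods, so the map is injective and open.  For
   surjectivity, a point of CF(X) outside X lies, for every i, in the closure of the part
   at distance > 1 from K i of exactly one component of X - K i (only finitely many
   components reach that far, as the unit sphere around K i is compact), and these
   components form an end. *)

theory Submission
  imports Defs
begin

section \<open>Proper and geodesic metric spaces\<close>

lemma proper_compact:
  fixes S :: "'a::metric_space set"
  assumes "proper_metric_space TYPE('a)" "bounded S" "closed S"
  shows "compact S"
  using assms unfolding proper_metric_space_def by blast

lemma bounded_infdist_le:
  fixes C :: "'a::metric_space set"
  assumes "bounded C" "C \<noteq> {}"
  shows "bounded {z. infdist z C \<le> r}"
proof -
  obtain c R where R: "C \<subseteq> cball c R" using assms(1) bounded_subset_cball by blast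
  have "dist c z \<le> r + R" if "infdist z C \<le> r" for z
  proof -
    have "dist z c - R \<le> infdist z C"
      unfolding infdist_notempty[OF assms(2)]
    proof (rule cINF_greatest[OF assms(2)])
      fix y assume "y \<in> C"
      then have "dist c y \<le> R" using R by auto
      then show "dist z c - R \<le> dist z y" using dist_triangle[of z c y] by (simp add: dist_commute)
    qed
    then show ?thesis using that by (simp add: dist_commute)
  qed
  then show ?thesis by (intro bounded_subset[OF bounded_cball]) auto
qed

lemma proper_compact_infdist_le:
  fixes C :: "'a::metric_space set"
  assumes "proper_metric_space TYPE('a)" "bounded C" "C \<noteq> {}"
  shows "compact {z. infdist z C \<le> r}"
  by (intro proper_compact assms bounded_infdist_le closed_Collect_le continuous_intros)

lemma infdist_attained_compact:
  fixes A :: "'a::metric_space set"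
  assumes "compact A" "A \<noteq> {}"
  obtains a where "a \<in> A" "infdist x A = dist x a"
proof -
  have "continuous_on A (dist x)" by (intro continuous_intros)
  then obtain a where a: "a \<in> A" "\<And>b. b \<in> A \<Longrightarrow> dist x a \<le> dist x b"
    using continuous_attains_inf[OF assms] by blast
  have "infdist x A = dist x a"
    using a infdist_le[OF a(1)] unfolding infdist_notempty[OF assms(2)]
    by (intro antisym) (auto intro: cINF_greatest[OF assms(2)])
  then show thesis using that a(1) by blast
qed

lemma geodesic_initial_segment:
  fixes x y :: "'a::metric_space"
  assumes "geodesic_metric_space TYPE('a)" "0 \<le> a" "a \<le> dist x y"
  obtains G w where "connected G" "x \<in> G" "w \<in> G" "G \<subseteq> cball x a"
    "dist x w = a" "dist w y = dist x y - a"
proof -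
  obtain \<gamma> :: "real \<Rightarrow> 'a" where \<gamma>0: "\<gamma> 0 = x" and \<gamma>1: "\<gamma> (dist x y) = y"
    and isometric: "\<And>s t. s \<in> {0..dist x y} \<Longrightarrow> t \<in> {0..dist x y} \<Longrightarrow> dist (\<gamma> s) (\<gamma> t) = \<bar>s - t\<bar>"
    using assms(1) unfolding geodesic_metric_space_def by blast
  have "continuous_on {0..a} \<gamma>"
    unfolding continuous_on_iff
  proof (intro ballI allI impI)
    fix s e assume s: "s \<in> {0..a}" and "(0::real) < e"
    moreover have "dist (\<gamma> t) (\<gamma> s) = dist t s" if "t \<in> {0..a}" for t
      using isometric[of t s] that s assms(3) by (simp add: dist_real_def)
    ultimately show "\<exists>d>0. \<forall>t\<in>{0..a}. dist t s < d \<longrightarrow> dist (\<gamma> t) (\<gamma> s) < e" by auto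
  qed
  then have "connected (\<gamma> ` {0..a})" by (simp add: connected_continuous_image)
  moreover have "\<gamma> ` {0..a} \<subseteq> cball x a"
    using isometric[of 0] \<gamma>0 assms(3) by (auto simp: dist_commute)
  moreover have "dist x (\<gamma> a) = a" "dist (\<gamma> a) y = dist x y - a"
    using isometric[of 0 a] isometric[of a "dist x y"] \<gamma>0 \<gamma>1 assms(2,3) by auto
  ultimately show thesis using that assms(2) \<gamma>0 by (metis atLeastAtMost_iff image_eqI order_refl)
qed

lemma geodesic_connected_path:
  fixes x y :: "'a::metric_space"
  assumes "geodesic_metric_space TYPE('a)"
  obtains G where "connected G" "x \<in> G" "y \<in> G" "G \<subseteq> cball x (dist x y)"
  using geodesic_initial_segment[OF assms, of "dist x y" x y] by (metis diff_self dist_eq_0_iff order_refl zero_le_dist)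

lemma geodesic_connected_ball:
  assumes "geodesic_metric_space TYPE('a::metric_space)"
  shows "connected (ball (x::'a) r)"
proof -
  let ?F = "{G. connected G \<and> x \<in> G \<and> G \<subseteq> ball x r}"
  have "ball x r = \<Union>?F"
  proof
    show "ball x r \<subseteq> \<Union>?F"
    proof
      fix y assume "y \<in> ball x r"
      moreover obtain G where "connected G" "x \<in> G" "y \<in> G" "G \<subseteq> cball x (dist x y)"
        using geodesic_connected_path[OF assms] .
      ultimately show "y \<in> \<Union>?F" by (intro UnionI[of G]) auto
    qed
  qed auto
  moreover have "connected (\<Union>?F)"
    by (cases "\<Union>?F = {}") (auto intro!: connected_Union)
  ultimately show ?thesis by simp
qed

lemma geodesic_connected_UNIV:
  assumes "geodesic_metric_space TYPE('a::metric_space)"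
  shows "connected (UNIV::'a set)"
proof -
  obtain x :: 'a where True by blast
  have "y \<in> (\<Union>n::nat. ball x (real n + 1))" for y
    using reals_Archimedean2[of "dist x y"] by (smt (verit) UN_iff UNIV_I mem_ball)
  then have "UNIV = (\<Union>n::nat. ball x (real n + 1))" by blast
  moreover have "connected (\<Union>n::nat. ball x (real n + 1))"
  proof (rule connected_Union)
    have "x \<in> (\<Inter>n::nat. ball x (real n + 1))" by simp
    then show "\<Inter> (range (\<lambda>n::nat. ball x (real n + 1))) \<noteq> {}" by blast
  qed (auto intro: geodesic_connected_ball[OF assms])
  ultimately show ?thesis by simp
qed

lemma geodesic_open_component:
  fixes S :: "'a::metric_space set"
  assumes "geodesic_metric_space TYPE('a)" "open S" "C \<in> components S"
  shows "open C"
  unfolding open_contains_ball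
proof
  fix x assume "x \<in> C"
  moreover obtain e where "e > 0" "ball x e \<subseteq> S"
    using assms(2,3) \<open>x \<in> C\<close> in_components_subset open_contains_ball by blast
  ultimately have "ball x e \<subseteq> C"
    using components_maximal[OF assms(3) geodesic_connected_ball[OF assms(1)], of x e]
    by (metis centre_in_ball disjoint_iff)
  then show "\<exists>e>0. ball x e \<subseteq> C" using \<open>e > 0\<close> by blast
qed

lemma geodesic_same_component:
  fixes C :: "'a::metric_space set"
  assumes "geodesic_metric_space TYPE('a)" "U \<in> components (- C)" "dist z w < infdist z C"
  shows "z \<in> U \<longleftrightarrow> w \<in> U"
proof -
  obtain G where G: "connected G" "z \<in> G" "w \<in> G" "G \<subseteq> cball z (dist z w)"
    using geodesic_connected_path[OF assms(1)] .
  have "G \<subseteq> - C"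
    using G(4) assms(3) infdist_le[of _ C z] by fastforce
  then show ?thesis
    using components_maximal[OF assms(2) G(1)] G(2,3) by blast
qed

section \<open>Glacially oscillating functions\<close>

lemma glacial_chain_snoc:
  assumes "glacial_chain S xs"
    and "last xs \<notin> fst (S m)" "y \<notin> fst (S m)" "dist (last xs) y \<le> real (snd (S m))"
  shows "glacial_chain S (xs @ [y])"
  unfolding glacial_chain_def
proof (intro conjI allI impI)
  fix i assume i: "Suc i < length (xs @ [y])"
  have "xs \<noteq> []" using assms(1) unfolding glacial_chain_def by blast
  show "\<exists>m. (xs @ [y]) ! i \<notin> fst (S m) \<and> (xs @ [y]) ! Suc i \<notin> fst (S m) \<and>
             dist ((xs @ [y]) ! i) ((xs @ [y]) ! Suc i) \<le> real (snd (S m))"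
  proof (cases "Suc i < length xs")
    case True
    then show ?thesis using assms(1) unfolding glacial_chain_def by (simp add: nth_append)
  next
    case False
    with i have "i = length xs - 1" by simp
    with \<open>xs \<noteq> []\<close> have "(xs @ [y]) ! i = last xs" "(xs @ [y]) ! Suc i = y"
      by (auto simp: nth_append last_conv_nth)
    then show ?thesis using assms(2-4) by metis
  qed
qed simp

lemma glacial_chain_hd_last_eq:
  assumes "glacial_chain S xs"
    and "\<And>a b m. a \<notin> fst (S m) \<Longrightarrow> b \<notin> fst (S m) \<Longrightarrow> dist a b \<le> real (snd (S m)) \<Longrightarrow> f a = f b"
  shows "f (hd xs) = f (last xs)"
proof -
  have ne: "xs \<noteq> []" using assms(1) unfolding glacial_chain_def by blast
  have "k < length xs \<Longrightarrow> f (xs ! k) = f (xs ! 0)" for k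
  proof (induction k)
    case (Suc k)
    then obtain m where "xs ! k \<notin> fst (S m)" "xs ! Suc k \<notin> fst (S m)"
      "dist (xs ! k) (xs ! Suc k) \<le> real (snd (S m))"
      using assms(1) unfolding glacial_chain_def by blast
    then have "f (xs ! k) = f (xs ! Suc k)" by (rule assms(2))
    with Suc show ?case by simp
  qed simp
  from this[of "length xs - 1"] show ?thesis using ne by (simp add: hd_conv_nth last_conv_nth)
qed

lemma glacial_scale_infdist:
  fixes C :: "'a::metric_space set"
  assumes "bounded C" "C \<noteq> {}"
  shows "glacial_scale (\<lambda>m. ({z. infdist z C \<le> real m + 1}, m))"
proof -
  have "\<exists>m. A \<subseteq> {z. infdist z C \<le> real m + 1} \<and> r < real m" if A: "bounded A" for A and r :: real
  proof -
    obtain c where c: "c \<in> C" using assms(2) by blast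
    obtain R where R: "\<forall>y\<in>A. dist c y \<le> R" using A bounded_any_center by metis
    obtain m :: nat where m: "\<bar>R\<bar> + \<bar>r\<bar> < real m" using reals_Archimedean2 by blast
    have "infdist z C \<le> R" if "z \<in> A" for z
      using R that infdist_le[OF c, of z] by (metis dist_commute order_trans)
    then show ?thesis using m by (intro exI[of _ m]) force
  qed
  then show ?thesis unfolding glacial_scale_def by (simp add: bounded_infdist_le assms)
qed

lemma glacially_oscillating_if_constant_on_far_steps:
  fixes C :: "'a::metric_space set"
  assumes "bounded C" "C \<noteq> {}"
    and "\<And>a b m. real m + 1 < infdist a C \<Longrightarrow> real m + 1 < infdist b C \<Longrightarrow> dist a b \<le> real m
           \<Longrightarrow> f a = f b"
  shows "glacially_oscillating f"
  unfolding glacially_oscillating_def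
proof (intro allI impI)
  fix \<epsilon> :: real assume "\<epsilon> > 0"
  let ?S = "\<lambda>m. ({z. infdist z C \<le> real m + 1}, m)"
  have "\<forall>xs. glacial_chain ?S xs \<longrightarrow> \<bar>f (hd xs) - f (last xs)\<bar> < \<epsilon>"
  proof (intro allI impI)
    fix xs assume "glacial_chain ?S xs"
    then have "f (hd xs) = f (last xs)"
      by (rule glacial_chain_hd_last_eq) (auto simp: not_le intro!: assms(3))
    then show "\<bar>f (hd xs) - f (last xs)\<bar> < \<epsilon>" using \<open>\<epsilon> > 0\<close> by simp
  qed
  then show "\<exists>S. glacial_scale S \<and> (\<forall>xs. glacial_chain S xs \<longrightarrow> \<bar>f (hd xs) - f (last xs)\<bar> < \<epsilon>)"
    using glacial_scale_infdist[OF assms(1,2)] by blast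
qed

lemma glacially_oscillating_small_on_connected:
  fixes f :: "'a::metric_space \<Rightarrow> real"
  assumes "glacially_oscillating f" "\<epsilon> > 0"
  obtains B where "bounded B"
    "\<And>U x y. connected U \<Longrightarrow> U \<inter> B = {} \<Longrightarrow> x \<in> U \<Longrightarrow> y \<in> U \<Longrightarrow> \<bar>f x - f y\<bar> < \<epsilon>"
proof -
  obtain S where S: "glacial_scale S"
    and chain: "\<And>xs. glacial_chain S xs \<Longrightarrow> \<bar>f (hd xs) - f (last xs)\<bar> < \<epsilon>"
    using assms unfolding glacially_oscillating_def by blast
  obtain m where m: "1 < real (snd (S m))"
    using S unfolding glacial_scale_def by (metis zero_less_one)
  have "\<bar>f x - f y\<bar> < \<epsilon>" if U: "connected U" "U \<inter> fst (S m) = {}" "x \<in> U" "y \<in> U" for U x y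
  proof -
    let ?P = "\<lambda>z. \<exists>xs. glacial_chain S xs \<and> hd xs = x \<and> last xs = z"
    have "?P y"
    proof (rule connected_induction_simple[OF U(1) U(3,4), of ?P])
      show "?P x" by (intro exI[of _ "[x]"]) (simp add: glacial_chain_def)
    next
      fix a assume "a \<in> U"
      show "\<exists>T. openin (top_of_set U) T \<and> a \<in> T \<and> (\<forall>z\<in>T. \<forall>w\<in>T. ?P z \<longrightarrow> ?P w)"
      proof (intro exI[of _ "U \<inter> ball a (1/2)"] conjI ballI impI)
        show "openin (top_of_set U) (U \<inter> ball a (1/2))" by (simp add: openin_open_Int)
        show "a \<in> U \<inter> ball a (1/2)" using \<open>a \<in> U\<close> by simp
        fix z w assume z: "z \<in> U \<inter> ball a (1/2)" and w: "w \<in> U \<inter> ball a (1/2)" and "?P z"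
        then obtain xs where xs: "glacial_chain S xs" "hd xs = x" "last xs = z" by blast
        have "dist z w < 1" using z w dist_triangle_half_r[of a z "1" w] by (simp add: dist_commute)
        then have "glacial_chain S (xs @ [w])"
          using glacial_chain_snoc[OF xs(1)] xs(3) z w U(2) m by fastforce
        moreover have "xs \<noteq> []" using xs(1) unfolding glacial_chain_def by blast
        ultimately show "?P w" using xs(2) by (intro exI[of _ "xs @ [w]"]) simp
      qed
    qed
    then show ?thesis using chain by blast
  qed
  moreover have "bounded (fst (S m))" using S unfolding glacial_scale_def by blast
  ultimately show thesis using that by blast
qed

lemma CF_functions_continuous: "f \<in> CF_functions \<Longrightarrow> continuous_on UNIV f"
  and CF_functions_glacially_oscillating: "f \<in> CF_functions \<Longrightarrow> glacially_oscillating f"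
  unfolding CF_functions_def by auto

lemma CF_functions_range: "f \<in> CF_functions \<Longrightarrow> f x \<in> {0..1}"
  unfolding CF_functions_def by blast

definition tent :: "'a::metric_space \<Rightarrow> real \<Rightarrow> 'a \<Rightarrow> real" where
  "tent x r z = max 0 (1 - dist z x / r)"

lemma tent_centre: "r > 0 \<Longrightarrow> tent x r x = 1"
  unfolding tent_def by simp

lemma tent_eq_0_iff: "r > 0 \<Longrightarrow> tent x r z = 0 \<longleftrightarrow> r \<le> dist z x"
  unfolding tent_def by (auto simp: field_simps max_def)

lemma tent_CF:
  assumes "r > 0"
  shows "tent x r \<in> CF_functions"
  unfolding CF_functions_def
proof (intro CollectI conjI)
  show "continuous_on UNIV (tent x r)" unfolding tent_def by (intro continuous_intros) (use assms in auto)
  show "range (tent x r) \<subseteq> {0..1}" unfolding tent_def using assms by auto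
  show "glacially_oscillating (tent x r)"
  proof (rule glacially_oscillating_if_constant_on_far_steps[of "cball x r"])
    fix a b :: 'a and m :: nat
    assume "real m + 1 < infdist a (cball x r)" "real m + 1 < infdist b (cball x r)"
    then have "a \<notin> cball x r" "b \<notin> cball x r" by auto
    then have "r \<le> dist a x" "r \<le> dist b x" by (auto simp: dist_commute)
    then show "tent x r a = tent x r b" using tent_eq_0_iff[OF assms, of x] by metis
  qed (use assms in auto)
qed

definition depth :: "'a::metric_space set \<Rightarrow> 'a \<Rightarrow> real" where
  "depth U z = min 1 (infdist z (- U))"

lemma depth_eq_0: "z \<notin> U \<Longrightarrow> depth U z = 0"
  unfolding depth_def by simp

lemma depth_pos: "open U \<Longrightarrow> U \<noteq> UNIV \<Longrightarrow> z \<in> U \<Longrightarrow> depth U z > 0"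
  unfolding depth_def using infdist_pos_not_in_closed[of "- U" z] by auto

lemma depth_component_eq_1:
  fixes C :: "'a::metric_space set"
  assumes "geodesic_metric_space TYPE('a)" "U \<in> components (- C)" "C \<noteq> {}"
    "z \<in> U" "1 \<le> infdist z C"
  shows "depth U z = 1"
proof -
  have "- U \<noteq> {}" using assms(2,3) in_components_subset by blast
  moreover have "1 \<le> dist z w" if "w \<in> - U" for w
    using geodesic_same_component[OF assms(1,2), of z w] assms(4,5) that by fastforce
  ultimately have "1 \<le> infdist z (- U)"
    unfolding infdist_notempty[OF \<open>- U \<noteq> {}\<close>] by (intro cINF_greatest) auto
  then show ?thesis unfolding depth_def by simp
qed

lemma depth_component_CF:
  fixes C :: "'a::metric_space set"
  assumes "geodesic_metric_space TYPE('a)" "U \<in> components (- C)" "bounded C" "C \<noteq> {}"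
  shows "depth U \<in> CF_functions"
  unfolding CF_functions_def
proof (intro CollectI conjI)
  show "continuous_on UNIV (depth U)" unfolding depth_def by (intro continuous_intros)
  show "range (depth U) \<subseteq> {0..1}" unfolding depth_def by (auto simp: min_def infdist_nonneg)
  show "glacially_oscillating (depth U)"
  proof (rule glacially_oscillating_if_constant_on_far_steps[OF assms(3,4)])
    fix a b m assume a: "real m + 1 < infdist a C" and b: "real m + 1 < infdist b C"
      and "dist a b \<le> real m"
    then have "a \<in> U \<longleftrightarrow> b \<in> U" using geodesic_same_component[OF assms(1,2)] by simp
    moreover have "1 \<le> infdist a C" "1 \<le> infdist b C" using a b by simp_all
    ultimately show "depth U a = depth U b"
      by (cases "a \<in> U") (simp_all add: depth_component_eq_1[OF assms(1,2,4)] depth_eq_0)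
  qed
qed

lemma Hausdorff_CF_cube: "Hausdorff_space CF_cube"
  unfolding CF_cube_def Hausdorff_space_product_topology
  by (simp add: Hausdorff_space_subtopology)

lemma CF_embed_in_cube: "CF_embed (x::'a::metric_space) \<in> topspace CF_cube"
proof -
  have "\<forall>f\<in>CF_functions. f x \<in> {0..1}" using CF_functions_range by blast
  then show ?thesis unfolding CF_cube_def CF_embed_def topspace_product_topology by auto
qed

lemma continuous_map_CF_embed: "continuous_map euclidean CF_cube (CF_embed :: 'a::metric_space \<Rightarrow> _)"
  unfolding CF_cube_def continuous_map_componentwise
proof (intro conjI ballI)
  fix f :: "'a \<Rightarrow> real" assume f: "f \<in> CF_functions"
  have "continuous_map euclidean (top_of_set {0..1}) f"
    using CF_functions_continuous[OF f] CF_functions_range[OF f]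
    by (simp add: continuous_map_in_subtopology)
  then show "continuous_map euclidean (top_of_set {0..1}) (\<lambda>x. CF_embed x f)"
    unfolding CF_embed_def using f by simp
qed (auto simp: CF_embed_def)

lemma continuous_map_CF_coordinate:
  assumes "f \<in> CF_functions"
  shows "continuous_map CF_cube euclideanreal (\<lambda>p. p f)"
  using continuous_map_product_projection[OF assms, of "\<lambda>_. top_of_set {0..1::real}"]
  unfolding CF_cube_def by (simp add: continuous_map_in_subtopology)

lemma CF_closure_coordinate_bound:
  assumes "p \<in> CF_cube closure_of (CF_embed ` A)" "f \<in> CF_functions" "\<And>x. x \<in> A \<Longrightarrow> \<bar>f x - c\<bar> \<le> \<epsilon>"
  shows "\<bar>p f - c\<bar> \<le> \<epsilon>"
proof (rule forall_in_closure_of[OF assms(1), of "\<lambda>q. \<bar>q f - c\<bar> \<le> \<epsilon>"])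
  show "\<bar>q f - c\<bar> \<le> \<epsilon>" if "q \<in> CF_embed ` A" for q
    using that assms(2,3) unfolding CF_embed_def by auto
  have "closedin CF_cube {q \<in> topspace CF_cube. q f \<in> cball c \<epsilon>}"
    by (rule closedin_continuous_map_preimage[OF continuous_map_CF_coordinate[OF assms(2)]]) simp
  then show "closedin CF_cube {q \<in> topspace CF_cube. \<bar>q f - c\<bar> \<le> \<epsilon>}"
    by (simp add: dist_real_def abs_minus_commute)
qed

lemma limitin_sequentially_in_closure_of:
  assumes "limitin X \<sigma> l sequentially" "\<And>n. \<sigma> n \<in> S"
  shows "l \<in> X closure_of S"
  unfolding in_closure_of
proof (intro conjI allI impI)
  show "l \<in> topspace X" using assms(1) limitin_topspace by metis
  fix T assume "l \<in> T \<and> openin X T"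
  then obtain N where "\<forall>n\<ge>N. \<sigma> n \<in> T" using assms(1) unfolding limitin_sequentially by blast
  then show "\<exists>y. y \<in> S \<and> y \<in> T" using assms(2) by blast
qed

lemma open_map_topology_generated_by:
  assumes "inj_on h (topspace (topology_generated_by B))" "\<And>b. b \<in> B \<Longrightarrow> openin Y (h ` b)"
  shows "open_map (topology_generated_by B) Y h"
  unfolding open_map_def openin_topology_generated_by_iff
proof (intro allI impI)
  fix U assume "generate_topology_on B U"
  then show "openin Y (h ` U)"
  proof (induction rule: generate_topology_on.induct)
    case (Int a b)
    then have "openin (topology_generated_by B) a" "openin (topology_generated_by B) b"
      by (simp_all add: openin_topology_generated_by_iff)
    then have "a \<subseteq> topspace (topology_generated_by B)" "b \<subseteq> topspace (topology_generated_by B)"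
      by (blast dest: openin_subset)+
    then have "h ` (a \<inter> b) = h ` a \<inter> h ` b" using inj_on_image_Int[OF assms(1)] by blast
    then show ?case using Int.IH by (simp add: openin_Int)
  next
    case (UN F)
    then show ?case by (auto simp: image_Union)
  qed (simp_all add: assms(2))
qed

section \<open>Exhaustions and their ends\<close>

locale exhaustion_seq =
  fixes K :: "nat \<Rightarrow> 'a::metric_space set"
  assumes exhaustion: "exhaustion K"
begin

lemma compact_K: "compact (K i)"
  using exhaustion unfolding exhaustion_def by blast

lemma closed_K: "closed (K i)"
  by (simp add: compact_K compact_imp_closed)

lemma bounded_K: "bounded (K i)"
  by (simp add: compact_K compact_imp_bounded)

lemma K_mono: "i \<le> j \<Longrightarrow> K i \<subseteq> K j"
  by (rule lift_Suc_mono_le[of K]) (use exhaustion interior_subset in \<open>auto simp: exhaustion_def\<close>)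

lemma eventually_compact_subset_K:
  assumes "compact C"
  shows "\<forall>\<^sub>F i in sequentially. C \<subseteq> K i"
proof -
  have "C \<subseteq> (\<Union>i. interior (K (Suc i)))"
    using exhaustion unfolding exhaustion_def by blast
  then obtain F where F: "finite F" "C \<subseteq> (\<Union>j\<in>F. interior (K (Suc j)))"
    using compactE_image[OF assms, of UNIV "\<lambda>j. interior (K (Suc j))"] by auto
  have "C \<subseteq> K i" if "Suc (Max (insert 0 F)) \<le> i" for i
  proof
    fix x assume "x \<in> C"
    then obtain j where "j \<in> F" "x \<in> K (Suc j)" using F(2) interior_subset by blast
    moreover have "Suc j \<le> i" using \<open>j \<in> F\<close> F(1) that by (meson Max_ge Suc_le_mono finite_insert insertI2 order_trans)
    ultimately show "x \<in> K i" using K_mono by blast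
  qed
  then show ?thesis unfolding eventually_sequentially by blast
qed

lemma eventually_K_nonempty: "\<forall>\<^sub>F i in sequentially. K i \<noteq> {}"
  using eventually_compact_subset_K[of "{undefined}"] by (auto elim: eventually_mono)

lemma end_component: "e \<in> freudenthal_ends K \<Longrightarrow> e i \<in> components (- K i)"
  unfolding freudenthal_ends_def by blast

lemma end_antimono: "e \<in> freudenthal_ends K \<Longrightarrow> i \<le> j \<Longrightarrow> e j \<subseteq> e i"
  unfolding freudenthal_ends_def by (rule lift_Suc_antimono_le[of e]) blast+

lemma end_nonempty: "e \<in> freudenthal_ends K \<Longrightarrow> e i \<noteq> {}"
  using end_component in_components_nonempty by blast

lemma end_disjoint_K: "e \<in> freudenthal_ends K \<Longrightarrow> x \<in> e i \<Longrightarrow> x \<notin> K i"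
  using end_component in_components_subset by blast

lemma end_eq_component:
  assumes "e \<in> freudenthal_ends K" "U \<in> components (- K i)" "i \<le> j" "x \<in> e j" "x \<in> U"
  shows "e i = U"
  using components_nonoverlap[OF end_component[OF assms(1)] assms(2)] end_antimono[OF assms(1,3)] assms(4,5)
  by blast

definition end_point :: "(nat \<Rightarrow> 'a set) \<Rightarrow> nat \<Rightarrow> 'a" where
  "end_point e i = (SOME x. x \<in> e i)"

lemma end_point_in: "e \<in> freudenthal_ends K \<Longrightarrow> i \<le> j \<Longrightarrow> end_point e j \<in> e i"
  unfolding end_point_def using end_nonempty end_antimono by (metis some_in_eq subsetD)

definition end_limit :: "(nat \<Rightarrow> 'a set) \<Rightarrow> ('a \<Rightarrow> real) \<Rightarrow> real" where
  "end_limit e f = lim (\<lambda>i. f (end_point e i))"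

end

locale proper_geodesic_exhaustion = exhaustion_seq K for K :: "nat \<Rightarrow> 'a::metric_space set" +
  assumes proper: "proper_metric_space TYPE('a)"
    and geodesic: "geodesic_metric_space TYPE('a)"
begin

lemma components_Compl_empty: "components (- {}) = {UNIV :: 'a set}"
  using geodesic_connected_UNIV[OF geodesic] by (simp add: components_eq_sing_iff)

lemma open_component_K: "U \<in> components (- K i) \<Longrightarrow> open U"
  using geodesic_open_component[OF geodesic] closed_K by blast

lemma depth_CF: "U \<in> components (- K i) \<Longrightarrow> K i \<noteq> {} \<Longrightarrow> depth U \<in> CF_functions"
  using depth_component_CF[OF geodesic _ bounded_K] by blast

lemma eventually_CF_small_on_components:
  assumes "f \<in> CF_functions" "\<epsilon> > 0"
  shows "\<forall>\<^sub>F i in sequentially. \<forall>U\<in>components (- K i). \<forall>x\<in>U. \<forall>y\<in>U. \<bar>f x - f y\<bar> < \<epsilon>"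
proof -
  obtain B where B: "bounded B"
    and small: "\<And>U x y. connected U \<Longrightarrow> U \<inter> B = {} \<Longrightarrow> x \<in> U \<Longrightarrow> y \<in> U \<Longrightarrow> \<bar>f x - f y\<bar> < \<epsilon>"
    using glacially_oscillating_small_on_connected[OF CF_functions_glacially_oscillating[OF assms(1)] assms(2)]
    by blast
  have "compact (closure B)" using B by (intro proper_compact[OF proper]) auto
  then show ?thesis
  proof (rule eventually_mono[OF eventually_compact_subset_K], intro ballI)
    fix i U x y assume "closure B \<subseteq> K i" "U \<in> components (- K i)" "x \<in> U" "y \<in> U"
    moreover have "U \<inter> B = {}" using \<open>closure B \<subseteq> K i\<close> \<open>U \<in> components (- K i)\<close>
      in_components_subset closure_subset by blast
    ultimately show "\<bar>f x - f y\<bar> < \<epsilon>" using small in_components_connected by blast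
  qed
qed

lemma end_limit_LIMSEQ:
  assumes "f \<in> CF_functions" "e \<in> freudenthal_ends K"
  shows "(\<lambda>i. f (end_point e i)) \<longlonglongrightarrow> end_limit e f"
proof -
  have "Cauchy (\<lambda>i. f (end_point e i))"
  proof (rule CauchyI)
    fix \<epsilon> :: real assume "0 < \<epsilon>"
    then obtain N where "\<forall>n\<ge>N. \<forall>U\<in>components (- K n). \<forall>x\<in>U. \<forall>y\<in>U. \<bar>f x - f y\<bar> < \<epsilon>"
      using eventually_CF_small_on_components[OF assms(1)] unfolding eventually_sequentially by blast
    then have N: "\<forall>U\<in>components (- K N). \<forall>x\<in>U. \<forall>y\<in>U. \<bar>f x - f y\<bar> < \<epsilon>"
      using le_refl by blast
    have "\<bar>f (end_point e m) - f (end_point e n)\<bar> < \<epsilon>" if "N \<le> m" "N \<le> n" for m n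
      using N end_component[OF assms(2), of N] end_point_in[OF assms(2) that(1)]
        end_point_in[OF assms(2) that(2)] by blast
    then show "\<exists>M. \<forall>m\<ge>M. \<forall>n\<ge>M. norm (f (end_point e m) - f (end_point e n)) < \<epsilon>"
      by auto
  qed
  then show ?thesis
    unfolding end_limit_def using Cauchy_convergent convergent_LIMSEQ_iff by blast
qed

lemma eventually_end_limit_approx:
  assumes "f \<in> CF_functions" "\<epsilon> > 0"
  shows "\<forall>\<^sub>F i in sequentially. \<forall>e\<in>freudenthal_ends K. \<forall>x\<in>e i. \<bar>f x - end_limit e f\<bar> \<le> \<epsilon>"
proof (rule eventually_mono[OF eventually_CF_small_on_components[OF assms]], intro ballI)
  fix i e x
  assume small: "\<forall>U\<in>components (- K i). \<forall>x\<in>U. \<forall>y\<in>U. \<bar>f x - f y\<bar> < \<epsilon>"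
    and e: "e \<in> freudenthal_ends K" and x: "x \<in> e i"
  have "(\<lambda>j. \<bar>f x - f (end_point e j)\<bar>) \<longlonglongrightarrow> \<bar>f x - end_limit e f\<bar>"
    by (intro tendsto_intros end_limit_LIMSEQ assms(1) e)
  moreover have "\<bar>f x - f (end_point e j)\<bar> \<le> \<epsilon>" if "i \<le> j" for j
    using small end_component[OF e, of i] end_point_in[OF e that] x by (simp add: less_imp_le)
  then have "\<exists>N. \<forall>j\<ge>N. \<bar>f x - f (end_point e j)\<bar> \<le> \<epsilon>" by blast
  ultimately show "\<bar>f x - end_limit e f\<bar> \<le> \<epsilon>"
    by (rule LIMSEQ_le_const2)
qed

lemma end_limit_range:
  assumes "f \<in> CF_functions" "e \<in> freudenthal_ends K"
  shows "end_limit e f \<in> {0..1}"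
proof -
  have "0 \<le> end_limit e f" "end_limit e f \<le> 1"
    using CF_functions_range[OF assms(1)]
    by (auto intro!: LIMSEQ_le_const[OF end_limit_LIMSEQ[OF assms]] LIMSEQ_le_const2[OF end_limit_LIMSEQ[OF assms]])
  then show ?thesis by simp
qed

lemma end_limit_eventually_const:
  assumes "f \<in> CF_functions" "e \<in> freudenthal_ends K" "\<forall>\<^sub>F i in sequentially. \<forall>x\<in>e i. f x = c"
  shows "end_limit e f = c"
proof -
  have "\<forall>\<^sub>F i in sequentially. f (end_point e i) = c"
    using assms(3) end_point_in[OF assms(2) order_refl] by (auto elim: eventually_mono)
  then have "(\<lambda>i. f (end_point e i)) \<longlonglongrightarrow> c" by (rule tendsto_eventually)
  then show ?thesis using end_limit_LIMSEQ[OF assms(1,2)] LIMSEQ_unique by blast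
qed

lemma end_limit_tent:
  assumes "e \<in> freudenthal_ends K" "r > 0"
  shows "end_limit e (tent x r) = 0"
proof (rule end_limit_eventually_const[OF tent_CF[OF assms(2)] assms(1)])
  have "compact (cball x r)" by (simp add: proper_compact[OF proper])
  then show "\<forall>\<^sub>F i in sequentially. \<forall>z\<in>e i. tent x r z = 0"
  proof (rule eventually_mono[OF eventually_compact_subset_K], intro ballI)
    fix i z assume "cball x r \<subseteq> K i" "z \<in> e i"
    then have "r \<le> dist z x" using end_disjoint_K[OF assms(1)] by (force simp: dist_commute)
    then show "tent x r z = 0" using tent_eq_0_iff[OF assms(2)] by blast
  qed
qed

lemma end_limit_depth_own:
  assumes "e \<in> freudenthal_ends K" "K i \<noteq> {}"
  shows "end_limit e (depth (e i)) = 1"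
proof (rule end_limit_eventually_const[OF depth_CF[OF end_component[OF assms(1)] assms(2)] assms(1)])
  have "compact {z. infdist z (K i) \<le> 1}"
    by (rule proper_compact_infdist_le[OF proper bounded_K assms(2)])
  then have "\<forall>\<^sub>F j in sequentially. i \<le> j \<and> {z. infdist z (K i) \<le> 1} \<subseteq> K j"
    by (intro eventually_conj eventually_compact_subset_K) simp
  then show "\<forall>\<^sub>F j in sequentially. \<forall>z\<in>e j. depth (e i) z = 1"
  proof (rule eventually_mono, intro ballI)
    fix j z assume j: "i \<le> j \<and> {z. infdist z (K i) \<le> 1} \<subseteq> K j" and z: "z \<in> e j"
    then have "z \<notin> {z. infdist z (K i) \<le> 1}" using end_disjoint_K[OF assms(1)] by blast
    then have "1 \<le> infdist z (K i)" by simp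
    moreover have "z \<in> e i" using end_antimono[OF assms(1)] j z by blast
    ultimately show "depth (e i) z = 1"
      using depth_component_eq_1[OF geodesic end_component[OF assms(1)] assms(2)] by blast
  qed
qed

lemma end_limit_depth_other:
  assumes "e \<in> freudenthal_ends K" "U \<in> components (- K i)" "K i \<noteq> {}" "e i \<noteq> U"
  shows "end_limit e (depth U) = 0"
proof (rule end_limit_eventually_const[OF depth_CF[OF assms(2,3)] assms(1)])
  show "\<forall>\<^sub>F j in sequentially. \<forall>z\<in>e j. depth U z = 0"
    using eventually_ge_at_top[of i]
  proof (rule eventually_mono, intro ballI)
    fix j z assume "i \<le> j" "z \<in> e j"
    then have "z \<notin> U" using end_eq_component[OF assms(1,2)] assms(4) by blast
    then show "depth U z = 0" by (rule depth_eq_0)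
  qed
qed

section \<open>The map from the Freudenthal to the coarse Freudenthal compactification\<close>

abbreviation FT :: "('a + (nat \<Rightarrow> 'a set)) topology" where
  "FT \<equiv> freudenthal_compactification K"

abbreviation CFT :: "(('a \<Rightarrow> real) \<Rightarrow> real) topology" where
  "CFT \<equiv> coarse_freudenthal_compactification"

definition end_nbhd :: "'a set \<Rightarrow> ('a + (nat \<Rightarrow> 'a set)) set" where
  "end_nbhd U = Inl ` U \<union> Inr ` {e \<in> freudenthal_ends K. \<exists>j. e j = U}"

lemma openin_FT_basis: "B \<in> freudenthal_basis K \<Longrightarrow> openin FT B"
  unfolding freudenthal_compactification_def
  by (simp add: openin_topology_generated_by_iff generate_topology_on.Basis)

lemma openin_FT_Inl: "open V \<Longrightarrow> compact (closure V) \<Longrightarrow> openin FT (Inl ` V)"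
  by (rule openin_FT_basis) (auto simp: freudenthal_basis_def)

lemma openin_FT_Inl_ball: "open V \<Longrightarrow> openin FT (Inl ` (ball x r \<inter> V))"
  by (rule openin_FT_Inl) (auto intro: proper_compact[OF proper] bounded_subset[OF bounded_ball])

lemma openin_FT_end_nbhd: "U \<in> components (- K i) \<Longrightarrow> openin FT (end_nbhd U)"
  by (rule openin_FT_basis) (auto simp: freudenthal_basis_def end_nbhd_def)

lemma topspace_FT: "topspace FT = range Inl \<union> Inr ` freudenthal_ends K"
proof
  show "topspace FT \<subseteq> range Inl \<union> Inr ` freudenthal_ends K"
    unfolding freudenthal_compactification_def freudenthal_basis_def by auto
  have "Inl x \<in> topspace FT" for x
    using openin_subset[OF openin_FT_Inl_ball[of UNIV x 1]] by auto
  moreover have "Inr e \<in> topspace FT" if "e \<in> freudenthal_ends K" for e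
  proof -
    have "Inr e \<in> end_nbhd (e 0)" using that unfolding end_nbhd_def by blast
    then show ?thesis using openin_subset[OF openin_FT_end_nbhd[OF end_component[OF that]]] by blast
  qed
  ultimately show "range Inl \<union> Inr ` freudenthal_ends K \<subseteq> topspace FT" by blast
qed

definition end_extension :: "('a \<Rightarrow> real) \<Rightarrow> 'a + (nat \<Rightarrow> 'a set) \<Rightarrow> real" where
  "end_extension f q = (case q of Inl x \<Rightarrow> f x | Inr e \<Rightarrow> end_limit e f)"

lemma end_extension_range:
  assumes "f \<in> CF_functions" "q \<in> topspace FT"
  shows "end_extension f q \<in> {0..1}"
  using assms CF_functions_range[OF assms(1)] end_limit_range[OF assms(1)]
  unfolding topspace_FT end_extension_def by auto

lemma end_extension_near_end:
  assumes "f \<in> CF_functions" "e \<in> freudenthal_ends K" "\<delta> > 0"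
  obtains N where "\<And>p. p \<in> end_nbhd (e N) \<Longrightarrow> \<bar>end_extension f p - end_limit e f\<bar> < \<delta>"
proof -
  obtain N where N: "\<And>e' x. e' \<in> freudenthal_ends K \<Longrightarrow> x \<in> e' N \<Longrightarrow> \<bar>f x - end_limit e' f\<bar> \<le> \<delta>/3"
    using eventually_end_limit_approx[OF assms(1), of "\<delta>/3"] assms(3)
    unfolding eventually_sequentially by (meson le_refl zero_less_divide_iff zero_less_numeral)
  have "\<bar>end_extension f p - end_limit e f\<bar> < \<delta>" if "p \<in> end_nbhd (e N)" for p
  proof -
    from that consider y where "p = Inl y" "y \<in> e N"
      | e' j where "p = Inr e'" "e' \<in> freudenthal_ends K" "e' j = e N"
      unfolding end_nbhd_def by blast
    then show ?thesis
    proof cases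
      case 1
      then show ?thesis using N[OF assms(2)] assms(3) by (force simp: end_extension_def)
    next
      case 2
      obtain y where y: "y \<in> e' (max N j)" using end_nonempty[OF 2(2)] by blast
      then have "y \<in> e N" using end_antimono[OF 2(2), of j "max N j"] 2(3) by auto
      then have "\<bar>f y - end_limit e f\<bar> \<le> \<delta>/3" "\<bar>f y - end_limit e' f\<bar> \<le> \<delta>/3"
        using N[OF assms(2)] N[OF 2(2)] y end_antimono[OF 2(2), of N "max N j"] by auto
      then have "\<bar>end_limit e' f - end_limit e f\<bar> < \<delta>" using assms(3) by arith
      then show ?thesis using 2(1) by (simp add: end_extension_def)
    qed
  qed
  then show thesis using that by blast
qed

lemma continuous_map_end_extension:
  assumes "f \<in> CF_functions"
  shows "continuous_map FT euclideanreal (end_extension f)"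
  unfolding continuous_map_def
proof (intro conjI allI impI)
  fix T :: "real set" assume "openin euclideanreal T"
  then have T: "open T" by simp
  show "openin FT {q \<in> topspace FT. end_extension f q \<in> T}"
  proof (subst openin_subopen, intro ballI)
    fix q assume q: "q \<in> {q \<in> topspace FT. end_extension f q \<in> T}"
    then consider x where "q = Inl x" | e where "q = Inr e" "e \<in> freudenthal_ends K"
      using topspace_FT by blast
    then show "\<exists>W. openin FT W \<and> q \<in> W \<and> W \<subseteq> {q \<in> topspace FT. end_extension f q \<in> T}"
    proof cases
      case 1
      have "open (f -` T)" using open_vimage[OF T CF_functions_continuous[OF assms]] .
      then have "openin FT (Inl ` (ball x 1 \<inter> f -` T))" by (rule openin_FT_Inl_ball)
      then show ?thesis
        using q 1 openin_subset by (intro exI[of _ "Inl ` (ball x 1 \<inter> f -` T)"]) (force simp: end_extension_def)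
    next
      case 2
      obtain \<delta> where \<delta>: "\<delta> > 0" "ball (end_limit e f) \<delta> \<subseteq> T"
        using T q 2 unfolding end_extension_def open_contains_ball by auto
      obtain N where N: "\<And>p. p \<in> end_nbhd (e N) \<Longrightarrow> \<bar>end_extension f p - end_limit e f\<bar> < \<delta>"
        using end_extension_near_end[OF assms 2(2) \<delta>(1)] by blast
      have "openin FT (end_nbhd (e N))" by (rule openin_FT_end_nbhd[OF end_component[OF 2(2)]])
      moreover have "q \<in> end_nbhd (e N)" unfolding end_nbhd_def using 2 by blast
      moreover have "end_nbhd (e N) \<subseteq> {q \<in> topspace FT. end_extension f q \<in> T}"
        using N \<delta>(2) openin_subset[OF calculation(1)] by (force simp: dist_real_def abs_minus_commute)
      ultimately show ?thesis by blast
    qed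
  qed
qed simp

(* The restriction makes to_CF q an (extensional) point of the cube. *)
definition to_CF :: "'a + (nat \<Rightarrow> 'a set) \<Rightarrow> ('a \<Rightarrow> real) \<Rightarrow> real" where
  "to_CF q = restrict (\<lambda>f. end_extension f q) CF_functions"

lemma to_CF_Inl: "to_CF (Inl x) = CF_embed x"
  unfolding to_CF_def CF_embed_def end_extension_def by simp

lemma to_CF_apply: "f \<in> CF_functions \<Longrightarrow> to_CF q f = end_extension f q"
  unfolding to_CF_def by simp

lemma topspace_CFT: "topspace CFT = CF_cube closure_of range (CF_embed :: 'a \<Rightarrow> _)"
  unfolding coarse_freudenthal_compactification_def
  using closure_of_subset_topspace[of CF_cube "range (CF_embed :: 'a \<Rightarrow> _)"] by (simp add: Int_absorb1)

lemma to_CF_Inr_in_closure: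
  assumes "e \<in> freudenthal_ends K"
  shows "to_CF (Inr e) \<in> CF_cube closure_of range CF_embed"
proof (rule limitin_sequentially_in_closure_of)
  show "limitin CF_cube (\<lambda>n. CF_embed (end_point e n)) (to_CF (Inr e)) sequentially"
    unfolding CF_cube_def limitin_componentwise
  proof (intro conjI ballI)
    fix f :: "'a \<Rightarrow> real" assume f: "f \<in> CF_functions"
    show "limitin (top_of_set {0..1}) (\<lambda>n. CF_embed (end_point e n) f) (to_CF (Inr e) f) sequentially"
      unfolding limitin_subtopology
      using end_limit_LIMSEQ[OF f assms] end_limit_range[OF f assms] CF_functions_range[OF f] f
      by (simp add: to_CF_def end_extension_def CF_embed_def)
  qed (use CF_embed_in_cube[where 'a='a] in \<open>auto simp: to_CF_def CF_cube_def\<close>)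
qed simp

lemma to_CF_in_closure:
  assumes "q \<in> topspace FT"
  shows "to_CF q \<in> CF_cube closure_of range CF_embed"
proof -
  have "range CF_embed \<subseteq> CF_cube closure_of range (CF_embed :: 'a \<Rightarrow> _)"
    using CF_embed_in_cube by (intro closure_of_subset) blast
  then show ?thesis
    using assms to_CF_Inr_in_closure unfolding topspace_FT by (auto simp: to_CF_Inl)
qed

lemma continuous_map_to_CF: "continuous_map FT CFT to_CF"
  unfolding coarse_freudenthal_compactification_def continuous_map_in_subtopology
proof (intro conjI)
  show "to_CF \<in> topspace FT \<rightarrow> CF_cube closure_of range CF_embed" using to_CF_in_closure by blast
  show "continuous_map FT CF_cube to_CF"
    unfolding CF_cube_def continuous_map_componentwise
  proof (intro conjI ballI)
    fix f :: "'a \<Rightarrow> real" assume f: "f \<in> CF_functions"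
    have "continuous_map FT (top_of_set {0..1}) (end_extension f)"
      using continuous_map_end_extension[OF f] end_extension_range[OF f]
      by (simp add: continuous_map_in_subtopology)
    then show "continuous_map FT (top_of_set {0..1}) (\<lambda>q. to_CF q f)"
      by (rule continuous_map_eq) (simp add: to_CF_apply[OF f])
  qed (auto simp: to_CF_def)
qed

lemma end_extension_separates_points:
  assumes "x \<noteq> y"
  shows "end_extension (tent x (dist x y)) (Inl x) \<noteq> end_extension (tent x (dist x y)) (Inl y)"
  using assms tent_centre[of "dist x y" x] tent_eq_0_iff[of "dist x y" x y]
  by (simp add: end_extension_def dist_commute)

lemma end_extension_separates_point_end:
  assumes "e \<in> freudenthal_ends K"
  shows "end_extension (tent x 1) (Inl x) \<noteq> end_extension (tent x 1) (Inr e)"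
  using tent_centre[of 1 x] end_limit_tent[OF assms, of 1 x] by (simp add: end_extension_def)

lemma end_extension_separates_ends:
  assumes "e \<in> freudenthal_ends K" "e' \<in> freudenthal_ends K" "e \<noteq> e'"
  obtains f where "f \<in> CF_functions" "end_extension f (Inr e) \<noteq> end_extension f (Inr e')"
proof -
  obtain i where i: "e i \<noteq> e' i" using assms(3) by blast
  have "K i \<noteq> {}"
    using end_component[OF assms(1), of i] end_component[OF assms(2), of i] i components_Compl_empty
    by force
  show thesis
  proof (rule that[OF depth_CF[OF end_component[OF assms(1)] \<open>K i \<noteq> {}\<close>]])
    show "end_extension (depth (e i)) (Inr e) \<noteq> end_extension (depth (e i)) (Inr e')"
      using end_limit_depth_own[OF assms(1) \<open>K i \<noteq> {}\<close>]
        end_limit_depth_other[OF assms(2) end_component[OF assms(1)] \<open>K i \<noteq> {}\<close>] i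
      by (simp add: end_extension_def)
  qed
qed

lemma end_extensions_separate:
  assumes "p \<in> topspace FT" "q \<in> topspace FT" "p \<noteq> q"
  shows "\<exists>f\<in>CF_functions. end_extension f p \<noteq> end_extension f q"
proof -
  from assms(1,2) consider x y where "p = Inl x" "q = Inl y"
    | x e where "p = Inl x" "q = Inr e" "e \<in> freudenthal_ends K"
    | x e where "p = Inr e" "q = Inl x" "e \<in> freudenthal_ends K"
    | e e' where "p = Inr e" "q = Inr e'" "e \<in> freudenthal_ends K" "e' \<in> freudenthal_ends K"
    unfolding topspace_FT by blast
  then show ?thesis
  proof cases
    case 1
    then have "dist x y > 0" using assms(3) by simp
    then show ?thesis using end_extension_separates_points 1 assms(3) tent_CF by blast
  next
    case 2
    then show ?thesis using end_extension_separates_point_end tent_CF[of 1] by auto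
  next
    case 3
    then show ?thesis using end_extension_separates_point_end tent_CF[of 1] by (metis zero_less_one)
  next
    case 4
    then show ?thesis using end_extension_separates_ends assms(3) by metis
  qed
qed

lemma inj_on_to_CF: "inj_on to_CF (topspace FT)"
  by (rule inj_onI) (metis end_extensions_separate to_CF_apply)

section \<open>The points at infinity of the coarse compactification\<close>

definition outer :: "nat \<Rightarrow> 'a set" where
  "outer i = {z. 1 < infdist z (K i)}"

lemma compact_Compl_outer: "K i \<noteq> {} \<Longrightarrow> compact (- outer i)"
  using proper_compact_infdist_le[OF proper bounded_K, of i 1]
  by (simp add: outer_def Compl_eq not_less)

lemma outer_component_meets_unit_sphere:
  assumes "K i \<noteq> {}" "U \<in> components (- K i)" "z \<in> U" "z \<in> outer i"
  obtains w where "w \<in> U" "infdist w (K i) = 1"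
proof -
  obtain k where k: "k \<in> K i" "infdist z (K i) = dist z k"
    using infdist_attained_compact[OF compact_K assms(1)] by blast
  then have "1 < dist z k" using assms(4) unfolding outer_def by simp
  then obtain G w where G: "connected G" "z \<in> G" "w \<in> G" "G \<subseteq> cball z (dist z k - 1)"
    "dist z w = dist z k - 1" "dist w k = dist z k - (dist z k - 1)"
    using geodesic_initial_segment[OF geodesic, of "dist z k - 1" z k] by auto
  have "G \<subseteq> - K i"
    using G(4) k infdist_le[of _ "K i" z] by fastforce
  then have "w \<in> U" using components_maximal[OF assms(2) G(1)] G(2,3) assms(3) by blast
  moreover have "infdist w (K i) \<le> 1" using infdist_le[OF k(1), of w] G(6) by simp
  moreover have "infdist z (K i) \<le> infdist w (K i) + dist z w" by (rule infdist_triangle)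
  ultimately show thesis using that G(5) k(2) by fastforce
qed

lemma finite_outer_components:
  assumes "K i \<noteq> {}"
  shows "finite {U \<in> components (- K i). U \<inter> outer i \<noteq> {}}"
proof -
  let ?S = "{z. infdist z (K i) = 1}"
  have "?S = - outer i \<inter> ?S" by (auto simp: outer_def)
  moreover have "closed ?S" by (intro closed_Collect_eq continuous_intros)
  ultimately have "compact ?S" using compact_Int_closed[OF compact_Compl_outer[OF assms]] by metis
  moreover have "?S \<subseteq> \<Union>(components (- K i))"
    by (auto dest: infdist_zero)
  ultimately obtain F where F: "F \<subseteq> components (- K i)" "finite F" "?S \<subseteq> \<Union>F"
    using compactE[of ?S "components (- K i)"] open_component_K by metis
  have "{U \<in> components (- K i). U \<inter> outer i \<noteq> {}} \<subseteq> F"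
  proof
    fix U assume "U \<in> {U \<in> components (- K i). U \<inter> outer i \<noteq> {}}"
    then obtain z where U: "U \<in> components (- K i)" "z \<in> U" "z \<in> outer i" by blast
    then obtain w where "w \<in> U" "infdist w (K i) = 1"
      using outer_component_meets_unit_sphere[OF assms] by blast
    then obtain U' where "U' \<in> F" "w \<in> U'" using F(3) by blast
    then show "U \<in> F" using components_nonoverlap[OF U(1)] F(1) \<open>w \<in> U\<close> by blast
  qed
  then show ?thesis using F(2) finite_subset by blast
qed

definition outer_closure :: "nat \<Rightarrow> 'a set \<Rightarrow> (('a \<Rightarrow> real) \<Rightarrow> real) set" where
  "outer_closure i U = CF_cube closure_of (CF_embed ` (U \<inter> outer i))"

lemma closure_point_in_outer_closure:
  assumes "K i \<noteq> {}" "p \<in> CF_cube closure_of range CF_embed" "p \<notin> range CF_embed"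
  obtains U where "U \<in> components (- K i)" "p \<in> outer_closure i U"
proof -
  let ?\<U> = "{U \<in> components (- K i). U \<inter> outer i \<noteq> {}}"
  have "range CF_embed = CF_embed ` (- outer i) \<union> (\<Union>U\<in>?\<U>. CF_embed ` (U \<inter> outer i))"
  proof -
    have "outer i \<subseteq> \<Union>?\<U>"
    proof
      fix z assume "z \<in> outer i"
      then have "z \<in> - K i" by (auto simp: outer_def)
      then obtain U where "U \<in> components (- K i)" "z \<in> U" using Union_components by blast
      then show "z \<in> \<Union>?\<U>" using \<open>z \<in> outer i\<close> by blast
    qed
    then show ?thesis by blast
  qed
  then have "CF_cube closure_of range CF_embed
      = CF_cube closure_of (CF_embed ` (- outer i)) \<union> (\<Union>U\<in>?\<U>. outer_closure i U)"
    using finite_outer_components[OF assms(1)]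
    by (simp add: closure_of_Union image_image outer_closure_def)
  moreover have "compactin CF_cube (CF_embed ` (- outer i))"
    using compact_Compl_outer[OF assms(1)] continuous_map_CF_embed
    by (intro image_compactin) auto
  then have "CF_cube closure_of (CF_embed ` (- outer i)) = CF_embed ` (- outer i)"
    by (simp add: closure_of_closedin compactin_imp_closedin[OF Hausdorff_CF_cube])
  ultimately show thesis using assms(2,3) that by blast
qed

lemma outer_closure_unique:
  assumes "K i \<noteq> {}" "U \<in> components (- K i)" "U' \<in> components (- K i)"
    "p \<in> outer_closure i U" "p \<in> outer_closure i U'"
  shows "U = U'"
proof (rule ccontr)
  assume "U \<noteq> U'"
  have depth: "depth U \<in> CF_functions" by (rule depth_CF[OF assms(2,1)])
  have one: "depth U x = 1" if "x \<in> U \<inter> outer i" for x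
    using depth_component_eq_1[OF geodesic assms(2,1)] that by (simp add: outer_def)
  have zero: "depth U x = 0" if "x \<in> U'" for x
    using components_nonoverlap[OF assms(2,3)] \<open>U \<noteq> U'\<close> that depth_eq_0 by blast
  have "\<bar>p (depth U) - 1\<bar> \<le> 0"
    using assms(4) unfolding outer_closure_def
    by (rule CF_closure_coordinate_bound[OF _ depth]) (simp add: one)
  moreover have "\<bar>p (depth U) - 0\<bar> \<le> 0"
    using assms(5) unfolding outer_closure_def
    by (rule CF_closure_coordinate_bound[OF _ depth]) (simp add: zero)
  ultimately show False by simp
qed

(* For K i = {} the condition is vacuous: UNIV is then the only component. *)
definition closure_end :: "(('a \<Rightarrow> real) \<Rightarrow> real) \<Rightarrow> nat \<Rightarrow> 'a set" where
  "closure_end p i = (THE U. U \<in> components (- K i) \<and> (K i \<noteq> {} \<longrightarrow> p \<in> outer_closure i U))"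

lemma closure_end_spec:
  assumes "p \<in> CF_cube closure_of range CF_embed" "p \<notin> range CF_embed"
  shows "closure_end p i \<in> components (- K i)"
    and "K i \<noteq> {} \<Longrightarrow> p \<in> outer_closure i (closure_end p i)"
proof -
  have "\<exists>!U. U \<in> components (- K i) \<and> (K i \<noteq> {} \<longrightarrow> p \<in> outer_closure i U)"
  proof (cases "K i = {}")
    case True
    then show ?thesis using components_Compl_empty by simp
  next
    case False
    then show ?thesis
      using closure_point_in_outer_closure[OF False assms] outer_closure_unique[OF False] by metis
  qed
  then have "closure_end p i \<in> components (- K i) \<and> (K i \<noteq> {} \<longrightarrow> p \<in> outer_closure i (closure_end p i))"
    unfolding closure_end_def by (rule theI')
  then show "closure_end p i \<in> components (- K i)" "K i \<noteq> {} \<Longrightarrow> p \<in> outer_closure i (closure_end p i)"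
    by blast+
qed

lemma closure_end_in_ends:
  assumes "p \<in> CF_cube closure_of range CF_embed" "p \<notin> range CF_embed"
  shows "closure_end p \<in> freudenthal_ends K"
  unfolding freudenthal_ends_def
proof (intro CollectI conjI allI)
  fix i
  show "closure_end p i \<in> components (- K i)" by (rule closure_end_spec(1)[OF assms])
  let ?U = "closure_end p (Suc i)"
  have U: "?U \<in> components (- K (Suc i))" by (rule closure_end_spec(1)[OF assms])
  then have "?U \<subseteq> - K i" using in_components_subset[OF U] K_mono[of i "Suc i"] by auto
  then obtain V where V: "V \<in> components (- K i)" "?U \<subseteq> V"
    using exists_component_superset in_components_connected[OF U] in_components_nonempty[OF U] by blast
  show "?U \<subseteq> closure_end p i"
  proof (cases "K i = {}")
    case True
    then show ?thesis using closure_end_spec(1)[OF assms, of i] components_Compl_empty by simp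
  next
    case False
    have K: "K i \<subseteq> K (Suc i)" by (simp add: K_mono)
    then have "K (Suc i) \<noteq> {}" using False by auto
    have "infdist z (K (Suc i)) \<le> infdist z (K i)" for z
      by (rule infdist_mono[OF K False])
    then have "?U \<inter> outer (Suc i) \<subseteq> V \<inter> outer i"
      using V(2) unfolding outer_def by (auto intro: less_le_trans)
    then have "p \<in> outer_closure i V"
      using closure_end_spec(2)[OF assms \<open>K (Suc i) \<noteq> {}\<close>]
      unfolding outer_closure_def by (meson closure_of_mono image_mono subsetD)
    then have "V = closure_end p i"
      using outer_closure_unique[OF False V(1) closure_end_spec(1)[OF assms] _ closure_end_spec(2)[OF assms False]]
      by blast
    then show ?thesis using V(2) by simp
  qed
qed

lemma closure_point_eq_to_CF_end:
  assumes "p \<in> CF_cube closure_of range CF_embed" "p \<notin> range CF_embed"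
  shows "p = to_CF (Inr (closure_end p))"
proof
  fix f
  have e: "closure_end p \<in> freudenthal_ends K" by (rule closure_end_in_ends[OF assms])
  show "p f = to_CF (Inr (closure_end p)) f"
  proof (cases "f \<in> CF_functions")
    case f: True
    have "\<bar>p f - end_limit (closure_end p) f\<bar> \<le> \<epsilon>" if \<epsilon>: "\<epsilon> > 0" for \<epsilon>
    proof -
      have "\<exists>i. K i \<noteq> {} \<and> (\<forall>e\<in>freudenthal_ends K. \<forall>x\<in>e i. \<bar>f x - end_limit e f\<bar> \<le> \<epsilon>)"
        by (rule eventually_happens'[OF _ eventually_conj[OF eventually_K_nonempty
              eventually_end_limit_approx[OF f \<epsilon>]]]) simp
      then obtain i where i: "K i \<noteq> {}"
        "\<forall>e\<in>freudenthal_ends K. \<forall>x\<in>e i. \<bar>f x - end_limit e f\<bar> \<le> \<epsilon>"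
        by blast
      show ?thesis
        using closure_end_spec(2)[OF assms i(1)] unfolding outer_closure_def
        by (rule CF_closure_coordinate_bound[OF _ f]) (use i(2) e in blast)
    qed
    then have "\<bar>p f - end_limit (closure_end p) f\<bar> \<le> 0"
      by (rule field_le_epsilon) simp
    then have "p f = end_limit (closure_end p) f" by simp
    then show ?thesis using f by (simp add: to_CF_apply end_extension_def)
  next
    case False
    have "p \<in> topspace CF_cube"
      using assms(1) closure_of_subset_topspace[of CF_cube "range (CF_embed :: 'a \<Rightarrow> _)"] by blast
    then show ?thesis using False unfolding CF_cube_def to_CF_def by (auto simp: PiE_iff extensional_def)
  qed
qed

lemma to_CF_image_topspace: "to_CF ` topspace FT = topspace CFT"
proof
  show "to_CF ` topspace FT \<subseteq> topspace CFT" using to_CF_in_closure topspace_CFT by blast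
  show "topspace CFT \<subseteq> to_CF ` topspace FT"
  proof
    fix p assume "p \<in> topspace CFT"
    then have p: "p \<in> CF_cube closure_of range CF_embed" using topspace_CFT by simp
    show "p \<in> to_CF ` topspace FT"
    proof (cases "p \<in> range CF_embed")
      case True
      then obtain x where "p = to_CF (Inl x)" by (auto simp: to_CF_Inl)
      then show ?thesis using topspace_FT by blast
    next
      case False
      then show ?thesis
        using closure_point_eq_to_CF_end[OF p False] closure_end_in_ends[OF p False] topspace_FT by blast
    qed
  qed
qed

section \<open>Openness of the comparison map\<close>

definition CF_separated :: "('a + (nat \<Rightarrow> 'a set)) set \<Rightarrow> 'a + (nat \<Rightarrow> 'a set) \<Rightarrow> bool" where
  "CF_separated B q \<longleftrightarrow> (\<exists>g\<in>CF_functions. \<exists>c. c < end_extension g q \<and>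
     (\<forall>q'\<in>topspace FT. c < end_extension g q' \<longrightarrow> q' \<in> B))"

lemma openin_CFT_image_if_CF_separated:
  assumes "B \<subseteq> topspace FT" "\<And>q. q \<in> B \<Longrightarrow> CF_separated B q"
  shows "openin CFT (to_CF ` B)"
proof (subst openin_subopen, intro ballI)
  fix y assume "y \<in> to_CF ` B"
  then obtain q g c where q: "q \<in> B" "y = to_CF q" and g: "g \<in> CF_functions"
    and c: "c < end_extension g q" "\<And>q'. q' \<in> topspace FT \<Longrightarrow> c < end_extension g q' \<Longrightarrow> q' \<in> B"
    using assms(2) unfolding CF_separated_def by blast
  let ?W = "{p \<in> topspace CFT. p g \<in> {c<..}}"
  have "continuous_map CFT euclideanreal (\<lambda>p. p g)"
    unfolding coarse_freudenthal_compactification_def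
    by (rule continuous_map_from_subtopology[OF continuous_map_CF_coordinate[OF g]])
  then have "openin CFT ?W" by (rule openin_continuous_map_preimage) simp
  moreover have "y \<in> ?W"
    using q c(1) assms(1) to_CF_image_topspace by (auto simp: to_CF_apply[OF g])
  moreover have "?W \<subseteq> to_CF ` B"
  proof
    fix p assume p: "p \<in> ?W"
    then obtain q' where "q' \<in> topspace FT" "p = to_CF q'" using to_CF_image_topspace by blast
    then show "p \<in> to_CF ` B" using p c(2) by (auto simp: to_CF_apply[OF g])
  qed
  ultimately show "\<exists>W. openin CFT W \<and> y \<in> W \<and> W \<subseteq> to_CF ` B" by blast
qed

lemma CF_separated_Inl:
  assumes "open V" "x \<in> V"
  shows "CF_separated (Inl ` V) (Inl x)"
proof -
  obtain r where r: "r > 0" "ball x r \<subseteq> V" using assms open_contains_ball by blast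
  have "q' \<in> Inl ` V" if "q' \<in> topspace FT" "0 < end_extension (tent x r) q'" for q'
  proof -
    from that(1) consider z where "q' = Inl z" | e where "q' = Inr e" "e \<in> freudenthal_ends K"
      unfolding topspace_FT by blast
    then show ?thesis
    proof cases
      case 1
      then have "tent x r z \<noteq> 0" using that(2) by (simp add: end_extension_def)
      then have "dist z x < r" using tent_eq_0_iff[OF r(1), of x z] by simp
      then show ?thesis using 1 r(2) by (auto simp: dist_commute)
    next
      case 2
      then show ?thesis using that(2) end_limit_tent[OF 2(2) r(1)] by (simp add: end_extension_def)
    qed
  qed
  moreover have "0 < end_extension (tent x r) (Inl x)"
    using tent_centre[OF r(1), of x] by (simp add: end_extension_def)
  ultimately show ?thesis unfolding CF_separated_def using tent_CF[OF r(1)] by blast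
qed

lemma CF_separated_if_topspace_subset:
  assumes "topspace FT \<subseteq> B" "q \<in> topspace FT"
  shows "CF_separated B q"
proof -
  have "-1 < end_extension (tent undefined 1) q'" if "q' \<in> topspace FT" for q'
    using end_extension_range[OF tent_CF[of 1 undefined] that] by simp
  moreover have "tent undefined 1 \<in> CF_functions" by (rule tent_CF) simp
  ultimately show ?thesis
    unfolding CF_separated_def using assms by (intro bexI[of _ "tent undefined 1"] exI[of _ "-1"]) auto
qed

lemma topspace_subset_end_nbhd:
  assumes "K i = {}" "U \<in> components (- K i)"
  shows "topspace FT \<subseteq> end_nbhd U"
proof -
  have "U = UNIV" using assms components_Compl_empty by simp
  moreover have "e i = UNIV" if "e \<in> freudenthal_ends K" for e
    using end_component[OF that, of i] assms(1) components_Compl_empty by simp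
  ultimately show ?thesis unfolding topspace_FT end_nbhd_def by blast
qed

lemma in_end_nbhd_if_end_extension_depth_pos:
  assumes "K i \<noteq> {}" "U \<in> components (- K i)" "q \<in> topspace FT" "0 < end_extension (depth U) q"
  shows "q \<in> end_nbhd U"
proof -
  from assms(3) consider z where "q = Inl z" | e where "q = Inr e" "e \<in> freudenthal_ends K"
    unfolding topspace_FT by blast
  then show ?thesis
  proof cases
    case 1
    then have "depth U z \<noteq> 0" using assms(4) by (simp add: end_extension_def)
    then have "z \<in> U" using depth_eq_0 by blast
    then show ?thesis using 1 unfolding end_nbhd_def by blast
  next
    case 2
    then have "end_limit e (depth U) \<noteq> 0" using assms(4) by (simp add: end_extension_def)
    then have "e i = U" using end_limit_depth_other[OF 2(2) assms(2,1)] by blast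
    then show ?thesis using 2 unfolding end_nbhd_def by blast
  qed
qed

lemma end_extension_depth_pos:
  assumes "K i \<noteq> {}" "U \<in> components (- K i)" "q \<in> end_nbhd U"
  shows "0 < end_extension (depth U) q"
proof -
  have "U \<noteq> UNIV" using in_components_subset[OF assms(2)] assms(1) by blast
  from assms(3) consider z where "q = Inl z" "z \<in> U"
    | e j where "q = Inr e" "e \<in> freudenthal_ends K" "e j = U"
    unfolding end_nbhd_def by blast
  then show ?thesis
  proof cases
    case 1
    then show ?thesis
      using \<open>U \<noteq> UNIV\<close> depth_pos[OF open_component_K[OF assms(2)]] by (simp add: end_extension_def)
  next
    case 2
    then have "K j \<noteq> {}" using end_component[OF 2(2), of j] components_Compl_empty \<open>U \<noteq> UNIV\<close> by auto
    then show ?thesis using end_limit_depth_own[OF 2(2), of j] 2 by (simp add: end_extension_def)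
  qed
qed

lemma CF_separated_end_nbhd:
  assumes "U \<in> components (- K i)" "q \<in> end_nbhd U"
  shows "CF_separated (end_nbhd U) q"
proof (cases "K i = {}")
  case True
  then show ?thesis
    using CF_separated_if_topspace_subset topspace_subset_end_nbhd[OF True assms(1)]
      assms(2) openin_subset[OF openin_FT_end_nbhd[OF assms(1)]] by blast
next
  case False
  then show ?thesis
    unfolding CF_separated_def
    using depth_CF[OF assms(1) False] end_extension_depth_pos[OF False assms]
      in_end_nbhd_if_end_extension_depth_pos[OF False assms(1)] by blast
qed

lemma openin_CFT_basis_image:
  assumes "B \<in> freudenthal_basis K"
  shows "openin CFT (to_CF ` B)"
proof (rule openin_CFT_image_if_CF_separated)
  show "B \<subseteq> topspace FT" using openin_subset[OF openin_FT_basis[OF assms]] .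
  from assms consider V where "B = Inl ` V" "open V" | U i where "B = end_nbhd U" "U \<in> components (- K i)"
    unfolding freudenthal_basis_def end_nbhd_def by blast
  then show "CF_separated B q" if "q \<in> B" for q
    using that CF_separated_Inl CF_separated_end_nbhd by cases blast+
qed

lemma homeomorphic_map_to_CF: "homeomorphic_map FT CFT to_CF"
proof (rule bijective_open_imp_homeomorphic_map)
  show "open_map FT CFT to_CF"
    using open_map_topology_generated_by inj_on_to_CF openin_CFT_basis_image
    unfolding freudenthal_compactification_def by blast
qed (simp_all add: continuous_map_to_CF to_CF_image_topspace inj_on_to_CF)

end

theorem corollary4p7:
  fixes K :: "nat \<Rightarrow> 'a::metric_space set"
  assumes "proper_metric_space TYPE('a)"
    and "geodesic_metric_space TYPE('a)"
    and "exhaustion K"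
  shows "\<exists>h. homeomorphic_map (freudenthal_compactification K)
                (coarse_freudenthal_compactification :: (('a \<Rightarrow> real) \<Rightarrow> real) topology) h
           \<and> (\<forall>x. h (Inl x) = CF_embed x)"
proof -
  interpret proper_geodesic_exhaustion K
    using assms by unfold_locales
  show ?thesis using homeomorphic_map_to_CF to_CF_Inl by blast
qed

end
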